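(* For every positive integer $k$, $g_{k,U}=B_U(k)!\,\dfrac{\left(\prod_{j=1}^{k-1}j!\right)^2}{\prod_{j=1}^{2k-1}j!}=B_U(k)!\,2^{k-k^2}\prod_{j=1}^{k-1}\dfrac{1}{(2j-1)!!\,(2j+1)!!}$, $g_{k,O}=B_O(k)!\,2^{B_O(k)+k-1}\prod_{j=1}^{k-1}\dfrac{j!}{(2j)!}=B_O(k)!\,2^{k-1}\prod_{j=1}^{k-1}\dfrac{1}{(2j-1)!!}$, $g_{k,Sp}=B_{Sp}(k)!\,2^{B_{Sp}(k)}\prod_{j=1}^{k}\dfrac{j!}{(2j)!}=B_{Sp}(k)!\prod_{j=1}^{k}\dfrac{1}{(2j-1)!!}$.
   Context: $n!!$ denotes the double factorial. For $\lambda\in\mathbb{C}$ let $B_U(\lambda)=\lambda^2$, $B_O(\lambda)=\tfrac12\lambda(\lambda-1)$, $B_{Sp}(\lambda)=\tfrac12\lambda(\lambda+1)$. Define $G_U(\lambda)=\lim_{N\to\infty}N^{-\lambda^2}\prod_{j=1}^{N}\frac{\Gamma(j)\Gamma(j+2\lambda)}{\Gamma(j+\lambda)^2}$, $G_O(\lambda)=\tfrac12\lim_{N\to\infty}N^{-\lambda(\lambda-1)/2}\,2^{2N\lambda}\prod_{j=1}^{N}\frac{\Gamma(N+j-1)\Gamma(j-\frac12+\lambda)}{\Gamma(N+j-1+\lambda)\Gamma(j-\frac12)}$, $G_{Sp}(\lambda)=\lim_{N\to\infty}N^{-\lambda(\lambda+1)/2}\,2^{2N\lambda}\prod_{j=1}^{N}\frac{\Gamma(N+j+1)\Gamma(j+\frac12+\lambda)}{\Gamma(N+j+1+\lambda)\Gamma(j+\frac12)}$,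 and $g_{\lambda,X}=\Gamma(1+B_X(\lambda))\,G_X(\lambda)$ for $X\in\{U,O,Sp\}$. *)

theory Defs
  imports "HOL-Analysis.Analysis"
begin

fun dfact :: "nat \<Rightarrow> nat" where
  "dfact 0 = 1"
| "dfact (Suc 0) = 1"
| "dfact (Suc (Suc n)) = Suc (Suc n) * dfact n"

definition B_U :: "complex \<Rightarrow> complex" where
  "B_U z = z ^ 2"
definition B_O :: "complex \<Rightarrow> complex" where
  "B_O z = z * (z - 1) / 2"
definition B_Sp :: "complex \<Rightarrow> complex" where
  "B_Sp z = z * (z + 1) / 2"

definition seq_U :: "complex \<Rightarrow> nat \<Rightarrow> complex" where
  "seq_U z N = of_nat N powr (- (z ^ 2)) *
     (\<Prod>j=1..N. Gamma (of_nat j) * Gamma (of_nat j + 2 * z) / (Gamma (of_nat j + z))^2)"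

definition seq_O :: "complex \<Rightarrow> nat \<Rightarrow> complex" where
  "seq_O z N = of_nat N powr (- (z * (z - 1) / 2)) * 2 powr (2 * of_nat N * z) *
     (\<Prod>j=1..N. Gamma (of_nat N + of_nat j - 1) * Gamma (of_nat j - 1/2 + z) /
                 (Gamma (of_nat N + of_nat j - 1 + z) * Gamma (of_nat j - 1/2)))"

definition seq_Sp :: "complex \<Rightarrow> nat \<Rightarrow> complex" where
  "seq_Sp z N = of_nat N powr (- (z * (z + 1) / 2)) * 2 powr (2 * of_nat N * z) *
     (\<Prod>j=1..N. Gamma (of_nat N + of_nat j + 1) * Gamma (of_nat j + 1/2 + z) /
                 (Gamma (of_nat N + of_nat j + 1 + z) * Gamma (of_nat j + 1/2)))"

definition G_U :: "complex \<Rightarrow> complex" where "G_U z = lim (seq_U z)"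
definition G_O :: "complex \<Rightarrow> complex" where "G_O z = 1/2 * lim (seq_O z)"
definition G_Sp :: "complex \<Rightarrow> complex" where "G_Sp z = lim (seq_Sp z)"

definition g_U :: "complex \<Rightarrow> complex" where "g_U z = Gamma (1 + B_U z) * G_U z"
definition g_O :: "complex \<Rightarrow> complex" where "g_O z = Gamma (1 + B_O z) * G_O z"
definition g_Sp :: "complex \<Rightarrow> complex" where "g_Sp z = Gamma (1 + B_Sp z) * G_Sp z"

end

theory Submission
  imports Defs
begin

(*
  At z = k every factor of the three products is a quotient of Gamma values whose arguments
  differ by k, i.e. a quotient of Pochhammer symbols of length k.  Exchanging the product over
  j <= N with the one over i < k gives Pochhammer symbols of length N instead.  The exchange
  identity (z)_m (z+m)_n = (z)_n (z+n)_m and the duplication formula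
  (2z)_(2n) = 4^n (z)_n (z+1/2)_n turn each of these into a constant times ratios
  (aN + c)_m / (aN)^m, which tend to 1; the powers of N and 2 in front of the products are
  exactly the ones absorbed this way.  The constants are ratios of factorials, and
  (2j)! = 2^j j! (2j-1)!! and (2j+1)! = 2^j j! (2j+1)!! bring the limits into the stated forms.
*)

section \<open>Pochhammer symbols\<close>

lemma pochhammer_exchange:
  "pochhammer z m * pochhammer (z + of_nat m) n = pochhammer z n * pochhammer (z + of_nat n) m"
  by (metis pochhammer_product' add.commute)

lemma pochhammer_shift_ratio:
  fixes z :: "'a::field"
  assumes "pochhammer z n \<noteq> 0" "pochhammer z m \<noteq> 0"
  shows "pochhammer (z + of_nat m) n / pochhammer z n = pochhammer (z + of_nat n) m / pochhammer z m"
  using pochhammer_exchange[of z m n] assms by (simp add: divide_simps mult.commute)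

lemma pochhammer_add_1_ratio:
  fixes a :: "'a::field"
  assumes "a \<noteq> 0" "pochhammer (a + 1) n \<noteq> 0"
  shows "pochhammer (a + 1) n / pochhammer a n = (a + of_nat n) / a"
proof -
  have "a * pochhammer (a + 1) n = pochhammer a n * (a + of_nat n)"
    by (metis pochhammer_rec pochhammer_Suc)
  then show ?thesis
    using assms by (auto simp: divide_simps mult.commute)
qed

lemma pochhammer_of_nat_add_1_neq_0: "pochhammer (of_nat m + 1 :: 'a::field_char_0) n \<noteq> 0"
proof -
  have "pochhammer (of_nat m + 1 :: 'a) n = of_nat (pochhammer (Suc m) n)"
    by (metis of_nat_Suc add.commute pochhammer_of_nat)
  moreover have "pochhammer (Suc m) n > 0"
    by (rule pochhammer_pos) simp
  ultimately show ?thesis by simp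
qed

lemma pochhammer_double_ratio:
  fixes z :: "'a::field_char_0"
  assumes "pochhammer (z + 1/2) n \<noteq> 0"
  shows "4 ^ n * pochhammer z n / pochhammer (z + 1/2 + of_nat n) n
           = pochhammer (2 * z) (2 * n) / pochhammer (z + 1/2) (2 * n)"
proof -
  have double: "pochhammer (2 * z) (2 * n) = 4 ^ n * pochhammer z n * pochhammer (z + 1/2) n"
    using pochhammer_double[of z n] by (simp add: power_mult)
  have split: "pochhammer (z + 1/2) (2 * n) = pochhammer (z + 1/2) n * pochhammer (z + 1/2 + of_nat n) n"
    unfolding mult_2 by (rule pochhammer_product')
  show ?thesis
    unfolding double split using assms by simp
qed

lemma pochhammer_half_ratio:
  "4 ^ N * pochhammer (of_nat m + 1/2 :: 'a::field_char_0) N / pochhammer (of_nat m + 1 + of_nat N) N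
     = pochhammer (of_nat m + 1 + of_nat (2 * N)) m / pochhammer (of_nat m + 1) m"
proof -
  have half: "of_nat m + 1/2 + 1/2 = (of_nat m + 1 :: 'a)"
    and double: "2 * (of_nat m + 1/2) = (of_nat m + 1 + of_nat m :: 'a)"
    by (simp_all add: field_simps)
  have "4 ^ N * pochhammer (of_nat m + 1/2 :: 'a) N / pochhammer (of_nat m + 1 + of_nat N) N
      = pochhammer (of_nat m + 1 + of_nat m) (2 * N) / pochhammer (of_nat m + 1) (2 * N)"
    using pochhammer_double_ratio[of "of_nat m + 1/2 :: 'a" N] pochhammer_of_nat_add_1_neq_0[of m N]
    unfolding half double by simp
  also have "\<dots> = pochhammer (of_nat m + 1 + of_nat (2 * N)) m / pochhammer (of_nat m + 1) m"
    by (intro pochhammer_shift_ratio pochhammer_of_nat_add_1_neq_0)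
  finally show ?thesis .
qed

lemma pochhammer_half_div_pochhammer:
  assumes "N > 0"
  shows "4 ^ N * pochhammer (of_nat i + 1/2 :: 'a::field_char_0) N / pochhammer (of_nat N + of_nat i) N
           = pochhammer (2 * of_nat N + (of_nat i + 1)) i / pochhammer (of_nat i + 1) i
               * ((2 * of_nat N + of_nat i) / (of_nat N + of_nat i))"
proof -
  let ?C = "pochhammer (of_nat N + of_nat i + 1 :: 'a) N"
  have "pochhammer (of_nat i + 1 + of_nat N :: 'a) N \<noteq> 0"
    using pochhammer_of_nat_add_1_neq_0[of "i + N" N, where 'a='a] by (simp add: ac_simps)
  then have half: "4 ^ N * pochhammer (of_nat i + 1/2 :: 'a) N
      = pochhammer (2 * of_nat N + (of_nat i + 1)) i / pochhammer (of_nat i + 1) i * ?C"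
    using pochhammer_half_ratio[of N i, where 'a='a] by (simp add: divide_eq_eq ac_simps)
  have "?C / pochhammer (of_nat N + of_nat i) N = (of_nat N + of_nat i + of_nat N) / (of_nat N + of_nat i)"
    using assms pochhammer_of_nat_add_1_neq_0[of "N + i" N, where 'a='a]
    by (intro pochhammer_add_1_ratio) (simp_all flip: of_nat_add)
  then have shift: "?C / pochhammer (of_nat N + of_nat i) N = (2 * of_nat N + of_nat i) / (of_nat N + of_nat i)"
    by (simp add: algebra_simps)
  show ?thesis
    unfolding half shift[symmetric] by (simp only: times_divide_eq_right)
qed

lemma fact_add_pochhammer: "fact (n + m) = fact n * pochhammer (of_nat n + 1) m"
  unfolding pochhammer_fact pochhammer_product' by (simp add: add.commute)

lemma prod_pochhammer_swap:
  "(\<Prod>j=1..N. pochhammer (c + of_nat j) k) = (\<Prod>i<k. pochhammer (c + of_nat i + 1) N)"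
  by (simp add: pochhammer_prod prod.atLeast1_atMost_eq atLeast0LessThan ac_simps
      flip: prod.swap[of _ "{..<N}"])

lemma tendsto_pochhammer_div_power:
  fixes c :: "'a::real_normed_field"
  assumes "filterlim f at_infinity F"
  shows "((\<lambda>x. pochhammer (f x + c) m / f x ^ m) \<longlongrightarrow> 1) F"
proof -
  have "((\<lambda>x. \<Prod>i<m. 1 + (c + of_nat i) / f x) \<longlongrightarrow> (\<Prod>i<m. 1 + 0)) F"
    by (intro tendsto_prod tendsto_add tendsto_const tendsto_divide_0[OF tendsto_const assms])
  moreover have "\<forall>\<^sub>F x in F. (\<Prod>i<m. 1 + (c + of_nat i) / f x) = pochhammer (f x + c) m / f x ^ m"
    using filterlim_at_infinity_imp_eventually_ne[OF assms, of 0]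
  proof eventually_elim
    case (elim x)
    have "(\<Prod>i<m. 1 + (c + of_nat i) / f x) = (\<Prod>i<m. (f x + c + of_nat i) / f x)"
      using elim by (intro prod.cong refl) (simp add: field_simps)
    also have "\<dots> = pochhammer (f x + c) m / f x ^ m"
      by (simp add: prod_dividef pochhammer_prod atLeast0LessThan)
    finally show ?case .
  qed
  ultimately show ?thesis by (simp add: tendsto_cong)
qed

lemma filterlim_two_of_nat_at_infinity:
  "filterlim (\<lambda>N. 2 * of_nat N :: 'a::real_normed_field) at_infinity sequentially"
  by (rule tendsto_mult_filterlim_at_infinity[OF tendsto_const _ tendsto_of_nat]) simp

lemma not_nonpos_Int_of_Re_pos: "Re z > 0 \<Longrightarrow> z \<notin> \<int>\<^sub>\<le>\<^sub>0"
  by (auto elim!: nonpos_Ints_cases)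

lemma Gamma_ratio_pochhammer:
  assumes "w \<notin> \<int>\<^sub>\<le>\<^sub>0" "v \<notin> \<int>\<^sub>\<le>\<^sub>0"
  shows "Gamma w * Gamma (v + of_nat k) / (Gamma (w + of_nat k) * Gamma v)
           = pochhammer v k / pochhammer w k"
  using assms by (simp add: pochhammer_Gamma ac_simps)

lemma prod_Gamma_ratio_pochhammer:
  assumes "Re v > -1" "Re w > -1"
  shows "(\<Prod>j=1..N. Gamma (w + of_nat j) * Gamma (v + of_nat j + of_nat k)
                      / (Gamma (w + of_nat j + of_nat k) * Gamma (v + of_nat j)))
       = (\<Prod>i<k. pochhammer (v + of_nat i + 1) N / pochhammer (w + of_nat i + 1) N)"
proof -
  have "(\<Prod>j=1..N. Gamma (w + of_nat j) * Gamma (v + of_nat j + of_nat k)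
                      / (Gamma (w + of_nat j + of_nat k) * Gamma (v + of_nat j)))
      = (\<Prod>j=1..N. pochhammer (v + of_nat j) k / pochhammer (w + of_nat j) k)"
    using assms by (intro prod.cong refl Gamma_ratio_pochhammer not_nonpos_Int_of_Re_pos) auto
  also have "\<dots> = (\<Prod>i<k. pochhammer (v + of_nat i + 1) N / pochhammer (w + of_nat i + 1) N)"
    by (simp only: prod_dividef prod_pochhammer_swap)
  finally show ?thesis .
qed

section \<open>The three sequences at positive integers\<close>

lemma of_nat_powr_minus_sum:
  assumes "N > 0"
  shows "(of_nat N :: complex) powr (- of_nat (\<Sum>i\<in>A. e i)) = (\<Prod>i\<in>A. inverse (of_nat N ^ e i))"
  using assms by (simp add: powr_minus powr_nat' power_sum del: of_nat_sum flip: prod_inversef[unfolded comp_def])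

lemma of_nat_triangle_minus: "(of_nat k * (of_nat k - 1) / 2 :: 'a::field_char_0) = of_nat (\<Sum>i<k. i)"
  by (induction k) (simp_all add: field_simps)

lemma of_nat_triangle_plus: "(of_nat k * (of_nat k + 1) / 2 :: 'a::field_char_0) = of_nat (\<Sum>i<k. Suc i)"
  by (induction k) (simp_all add: field_simps)

lemma two_powr_eq_prod_four_power: "(2::complex) powr (2 * of_nat N * of_nat k) = (\<Prod>i<k. 4 ^ N)"
proof -
  have "(2::complex) powr (2 * of_nat N * of_nat k) = 2 ^ (2 * N * k)"
    by (metis of_nat_mult of_nat_numeral powr_nat' zero_neq_numeral)
  then show ?thesis
    by (simp add: power_mult)
qed

lemma seq_U_of_nat:
  assumes "N > 0"
  shows "seq_U (of_nat k) N
           = (\<Prod>i<k. fact i / fact (i + k) * (pochhammer (of_nat N + (of_nat i + 1)) k / of_nat N ^ k))"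
proof -
  have "(\<Prod>j=1..N. Gamma (of_nat j) * Gamma (of_nat j + 2 * of_nat k) / (Gamma (of_nat j + of_nat k))\<^sup>2)
      = (\<Prod>j=1..N. Gamma (0 + of_nat j :: complex) * Gamma (of_nat k + of_nat j + of_nat k)
                      / (Gamma (0 + of_nat j + of_nat k) * Gamma (of_nat k + of_nat j)))"
    by (intro prod.cong refl) (simp add: power2_eq_square mult_2 ac_simps)
  also have "\<dots> = (\<Prod>i<k. pochhammer (of_nat i + 1 + of_nat k) N / pochhammer (of_nat i + 1) N)"
    by (subst prod_Gamma_ratio_pochhammer) (simp_all add: ac_simps)
  also have "\<dots> = (\<Prod>i<k. pochhammer (of_nat i + 1 + of_nat N) k / pochhammer (of_nat i + 1) k)"
    by (intro prod.cong refl pochhammer_shift_ratio pochhammer_of_nat_add_1_neq_0)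
  also have "\<dots> = (\<Prod>i<k. pochhammer (of_nat N + (of_nat i + 1)) k / pochhammer (of_nat i + 1) k)"
    by (simp add: ac_simps)
  finally have gamma: "(\<Prod>j=1..N. Gamma (of_nat j :: complex) * Gamma (of_nat j + 2 * of_nat k)
                                      / (Gamma (of_nat j + of_nat k))\<^sup>2)
      = (\<Prod>i<k. pochhammer (of_nat N + (of_nat i + 1)) k / pochhammer (of_nat i + 1) k)" .
  have power: "of_nat N powr - ((of_nat k)\<^sup>2) = (\<Prod>i<k. inverse (of_nat N ^ k) :: complex)"
    using of_nat_powr_minus_sum[OF assms, of "\<lambda>_. k" "{..<k}"] by (simp add: power2_eq_square)
  show ?thesis
    unfolding seq_U_def gamma power prod.distrib[symmetric]
    by (intro prod.cong refl) (simp add: fact_add_pochhammer field_simps)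
qed

lemma seq_O_of_nat:
  assumes "N > 0"
  shows "seq_O (of_nat k) N
           = (\<Prod>i<k. 2 ^ (i + 1) * fact i / fact (2 * i)
                * (pochhammer (2 * of_nat N + (of_nat i + 1)) i / (2 * of_nat N) ^ i)
                * ((2 * of_nat N + of_nat i) / (2 * of_nat N)) / ((of_nat N + of_nat i) / of_nat N))"
proof -
  have "(\<Prod>j=1..N. Gamma (of_nat N + of_nat j - 1) * Gamma (of_nat j - 1/2 + of_nat k)
                     / (Gamma (of_nat N + of_nat j - 1 + of_nat k) * Gamma (of_nat j - 1/2)))
      = (\<Prod>j=1..N. Gamma ((of_nat N - 1) + of_nat j :: complex) * Gamma (- 1/2 + of_nat j + of_nat k)
                     / (Gamma ((of_nat N - 1) + of_nat j + of_nat k) * Gamma (- 1/2 + of_nat j)))"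
    by (intro prod.cong refl) (simp add: algebra_simps)
  also have "\<dots> = (\<Prod>i<k. pochhammer (of_nat i + 1/2) N / pochhammer (of_nat N + of_nat i) N)"
    using assms by (subst prod_Gamma_ratio_pochhammer) (simp_all add: algebra_simps)
  finally have gamma: "(\<Prod>j=1..N. Gamma (of_nat N + of_nat j - 1) * Gamma (of_nat j - 1/2 + of_nat k)
                     / (Gamma (of_nat N + of_nat j - 1 + of_nat k) * Gamma (of_nat j - 1/2 :: complex)))
      = (\<Prod>i<k. pochhammer (of_nat i + 1/2) N / pochhammer (of_nat N + of_nat i) N)" .
  have power: "of_nat N powr - (of_nat k * (of_nat k - 1) / 2) = (\<Prod>i<k. inverse (of_nat N ^ i) :: complex)"
    unfolding of_nat_triangle_minus by (rule of_nat_powr_minus_sum[OF assms])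
  \<comment> \<open>The denominators start at N + i rather than N + i + 1 as in the symplectic case; the
    resulting factor (2N + i) / (N + i) tends to 2, which the 1/2 in the definition of G_O cancels.\<close>
  have factor: "inverse (of_nat N ^ i) * 4 ^ N * (pochhammer (of_nat i + 1/2) N / pochhammer (of_nat N + of_nat i) N)
      = 2 ^ (i + 1) * fact i / fact (2 * i)
          * (pochhammer (2 * of_nat N + (of_nat i + 1)) i / (2 * of_nat N) ^ i)
          * ((2 * of_nat N + of_nat i) / (2 * of_nat N)) / ((of_nat N + of_nat i) / of_nat N :: complex)" for i
  proof -
    let ?A = "pochhammer (2 * of_nat N + (of_nat i + 1)) i :: complex"
    let ?B = "pochhammer (of_nat i + 1) i :: complex"
    have fact: "fact (2 * i) = fact i * ?B"
      using fact_add_pochhammer[of i i] by (simp add: mult_2)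
    have alg: "inverse (n ^ i) * (a / b * (e / d))
        = 2 ^ (i + 1) * f / (f * b) * (a / (2 * n) ^ i) * (e / (2 * n)) / (d / n)"
      if "n \<noteq> 0" "b \<noteq> 0" "f \<noteq> 0" for a b d e f n :: complex
      using that by (simp add: field_simps power_mult_distrib)
    have "inverse (of_nat N ^ i) * 4 ^ N * (pochhammer (of_nat i + 1/2) N / pochhammer (of_nat N + of_nat i) N)
        = inverse (of_nat N ^ i) * (4 ^ N * pochhammer (of_nat i + 1/2 :: complex) N / pochhammer (of_nat N + of_nat i) N)"
      by (simp only: mult.assoc times_divide_eq_right)
    also have "\<dots> = inverse (of_nat N ^ i) * (?A / ?B * ((2 * of_nat N + of_nat i) / (of_nat N + of_nat i)))"
      by (simp only: pochhammer_half_div_pochhammer[OF assms])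
    also have "\<dots> = 2 ^ (i + 1) * fact i / fact (2 * i)
          * (?A / (2 * of_nat N) ^ i) * ((2 * of_nat N + of_nat i) / (2 * of_nat N)) / ((of_nat N + of_nat i) / of_nat N)"
      unfolding fact using assms pochhammer_of_nat_add_1_neq_0[of i i, where 'a=complex] by (intro alg) simp_all
    finally show ?thesis .
  qed
  show ?thesis
    unfolding seq_O_def gamma power two_powr_eq_prod_four_power prod.distrib[symmetric]
    by (rule prod.cong[OF refl factor])
qed

lemma seq_Sp_of_nat:
  assumes "N > 0"
  shows "seq_Sp (of_nat k) N
           = (\<Prod>j=1..k. 2 ^ j * fact j / fact (2 * j)
                * (pochhammer (2 * of_nat N + (of_nat j + 1)) j / (2 * of_nat N) ^ j))"
proof -
  have "(\<Prod>j=1..N. Gamma (of_nat N + of_nat j + 1) * Gamma (of_nat j + 1/2 + of_nat k)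
                     / (Gamma (of_nat N + of_nat j + 1 + of_nat k) * Gamma (of_nat j + 1/2)))
      = (\<Prod>j=1..N. Gamma ((of_nat N + 1) + of_nat j :: complex) * Gamma (1/2 + of_nat j + of_nat k)
                     / (Gamma ((of_nat N + 1) + of_nat j + of_nat k) * Gamma (1/2 + of_nat j)))"
    by (intro prod.cong refl) (simp add: algebra_simps)
  also have "\<dots> = (\<Prod>i<k. pochhammer (of_nat (Suc i) + 1/2) N / pochhammer (of_nat (Suc i) + 1 + of_nat N) N)"
    by (subst prod_Gamma_ratio_pochhammer) (simp_all add: algebra_simps)
  finally have gamma: "(\<Prod>j=1..N. Gamma (of_nat N + of_nat j + 1) * Gamma (of_nat j + 1/2 + of_nat k)
                     / (Gamma (of_nat N + of_nat j + 1 + of_nat k) * Gamma (of_nat j + 1/2 :: complex)))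
      = (\<Prod>i<k. pochhammer (of_nat (Suc i) + 1/2) N / pochhammer (of_nat (Suc i) + 1 + of_nat N) N)" .
  have power: "of_nat N powr - (of_nat k * (of_nat k + 1) / 2) = (\<Prod>i<k. inverse (of_nat N ^ Suc i) :: complex)"
    unfolding of_nat_triangle_plus by (rule of_nat_powr_minus_sum[OF assms])
  have factor: "inverse (of_nat N ^ m) * 4 ^ N * (pochhammer (of_nat m + 1/2) N / pochhammer (of_nat m + 1 + of_nat N) N)
      = 2 ^ m * fact m / fact (2 * m)
          * (pochhammer (2 * of_nat N + (of_nat m + 1)) m / (2 * of_nat N) ^ m :: complex)" for m
  proof -
    have fact: "fact (2 * m) = fact m * pochhammer (of_nat m + 1 :: complex) m"
      using fact_add_pochhammer[of m m] by (simp add: mult_2)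
    have arg: "of_nat m + 1 + of_nat (2 * N) = 2 * of_nat N + (of_nat m + 1 :: complex)"
      by simp
    have "inverse (of_nat N ^ m) * 4 ^ N * (pochhammer (of_nat m + 1/2) N / pochhammer (of_nat m + 1 + of_nat N) N)
        = inverse (of_nat N ^ m)
            * (4 ^ N * pochhammer (of_nat m + 1/2 :: complex) N / pochhammer (of_nat m + 1 + of_nat N) N)"
      by (simp only: mult.assoc times_divide_eq_right)
    also have "\<dots> = inverse (of_nat N ^ m)
                        * (pochhammer (2 * of_nat N + (of_nat m + 1)) m / pochhammer (of_nat m + 1) m)"
      by (simp only: pochhammer_half_ratio arg)
    also have "\<dots> = 2 ^ m * fact m / fact (2 * m) * (pochhammer (2 * of_nat N + (of_nat m + 1)) m / (2 * of_nat N) ^ m)"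
      unfolding fact using assms pochhammer_of_nat_add_1_neq_0[of m m, where 'a=complex]
      by (simp add: field_simps power_mult_distrib)
    finally show ?thesis .
  qed
  have "seq_Sp (of_nat k) N = (\<Prod>i<k. inverse (of_nat N ^ Suc i) * 4 ^ N
           * (pochhammer (of_nat (Suc i) + 1/2) N / pochhammer (of_nat (Suc i) + 1 + of_nat N) N))"
    unfolding seq_Sp_def gamma power two_powr_eq_prod_four_power prod.distrib ..
  also have "\<dots> = (\<Prod>i<k. 2 ^ Suc i * fact (Suc i) / fact (2 * Suc i)
                * (pochhammer (2 * of_nat N + (of_nat (Suc i) + 1)) (Suc i) / (2 * of_nat N) ^ Suc i))"
    by (rule prod.cong[OF refl factor])
  also have "\<dots> = (\<Prod>j=1..k. 2 ^ j * fact j / fact (2 * j)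
                * (pochhammer (2 * of_nat N + (of_nat j + 1)) j / (2 * of_nat N) ^ j))"
    by (simp only: One_nat_def prod.atLeast1_atMost_eq)
  finally show ?thesis .
qed

lemma seq_U_tendsto: "seq_U (of_nat k) \<longlonglongrightarrow> (\<Prod>i<k. fact i / fact (i + k))"
proof -
  have "(\<lambda>N. \<Prod>i<k. fact i / fact (i + k) * (pochhammer (of_nat N + (of_nat i + 1)) k / of_nat N ^ k))
          \<longlonglongrightarrow> (\<Prod>i<k. fact i / fact (i + k) * (1 :: complex))"
    by (intro tendsto_prod tendsto_mult tendsto_const tendsto_pochhammer_div_power tendsto_of_nat)
  moreover have "\<forall>\<^sub>F N in sequentially.
      (\<Prod>i<k. fact i / fact (i + k) * (pochhammer (of_nat N + (of_nat i + 1)) k / of_nat N ^ k)) = seq_U (of_nat k) N"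
    using eventually_gt_at_top[of 0] by eventually_elim (simp only: seq_U_of_nat)
  ultimately show ?thesis
    by (simp add: tendsto_cong)
qed

lemma seq_O_tendsto: "seq_O (of_nat k) \<longlonglongrightarrow> (\<Prod>i<k. 2 ^ (i + 1) * fact i / fact (2 * i))"
proof -
  have linear: "(\<lambda>N. (f N + c) / f N) \<longlonglongrightarrow> (1 :: complex)"
    if "filterlim f at_infinity sequentially" for f c
    using tendsto_pochhammer_div_power[OF that, of c 1] by simp
  have "(\<lambda>N. \<Prod>i<k. 2 ^ (i + 1) * fact i / fact (2 * i)
                * (pochhammer (2 * of_nat N + (of_nat i + 1)) i / (2 * of_nat N) ^ i)
                * ((2 * of_nat N + of_nat i) / (2 * of_nat N)) / ((of_nat N + of_nat i) / of_nat N))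
          \<longlonglongrightarrow> (\<Prod>i<k. 2 ^ (i + 1) * fact i / fact (2 * i) * 1 * 1 / (1 :: complex))"
    by (intro tendsto_prod tendsto_mult tendsto_divide tendsto_const tendsto_pochhammer_div_power
        linear filterlim_two_of_nat_at_infinity tendsto_of_nat) simp_all
  moreover have "\<forall>\<^sub>F N in sequentially.
      (\<Prod>i<k. 2 ^ (i + 1) * fact i / fact (2 * i)
                * (pochhammer (2 * of_nat N + (of_nat i + 1)) i / (2 * of_nat N) ^ i)
                * ((2 * of_nat N + of_nat i) / (2 * of_nat N)) / ((of_nat N + of_nat i) / of_nat N))
        = seq_O (of_nat k) N"
    using eventually_gt_at_top[of 0] by eventually_elim (simp only: seq_O_of_nat)
  ultimately show ?thesis
    by (simp add: tendsto_cong)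
qed

lemma seq_Sp_tendsto: "seq_Sp (of_nat k) \<longlonglongrightarrow> (\<Prod>j=1..k. 2 ^ j * fact j / fact (2 * j))"
proof -
  have "(\<lambda>N. \<Prod>j=1..k. 2 ^ j * fact j / fact (2 * j)
                * (pochhammer (2 * of_nat N + (of_nat j + 1)) j / (2 * of_nat N) ^ j))
          \<longlonglongrightarrow> (\<Prod>j=1..k. 2 ^ j * fact j / fact (2 * j) * (1 :: complex))"
    by (intro tendsto_prod tendsto_mult tendsto_const tendsto_pochhammer_div_power
        filterlim_two_of_nat_at_infinity)
  moreover have "\<forall>\<^sub>F N in sequentially.
      (\<Prod>j=1..k. 2 ^ j * fact j / fact (2 * j)
                * (pochhammer (2 * of_nat N + (of_nat j + 1)) j / (2 * of_nat N) ^ j)) = seq_Sp (of_nat k) N"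
    using eventually_gt_at_top[of 0] by eventually_elim (simp only: seq_Sp_of_nat)
  ultimately show ?thesis
    by (simp add: tendsto_cong)
qed

section \<open>Factorials and double factorials\<close>

lemma prod_atLeast1_pred_eq_lessThan:
  fixes f :: "nat \<Rightarrow> 'a::comm_monoid_mult"
  assumes "k > 0" "f 0 = 1"
  shows "(\<Prod>j=1..k-1. f j) = (\<Prod>j<k. f j)"
proof -
  obtain m where "k = Suc m"
    using assms(1) by (cases k) auto
  then show ?thesis
    using assms(2) by (simp add: prod.atLeast1_atMost_eq prod.lessThan_Suc_shift del: prod.lessThan_Suc)
qed

lemma prod_lessThan_double:
  fixes f :: "nat \<Rightarrow> 'a::comm_monoid_mult"
  shows "(\<Prod>j<2 * k. f j) = (\<Prod>j<k. f (2 * j) * f (2 * j + 1))"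
  by (induction k) (simp_all add: mult.assoc)

lemma fact_Suc_double_dfact: "fact (2 * j + 1) = 2 ^ j * fact j * dfact (2 * j + 1)"
proof (induction j)
  case (Suc j)
  have "2 * Suc j + 1 = Suc (Suc (2 * j + 1))"
    by simp
  then show ?case
    using Suc by (simp add: algebra_simps)
qed simp

lemma fact_double_dfact: "fact (2 * j) = 2 ^ j * fact j * dfact (2 * j - 1)"
proof (cases j)
  case (Suc m)
  then have "2 * j = Suc (2 * m + 1)" "2 * j - 1 = 2 * m + 1"
    by simp_all
  then show ?thesis
    using fact_Suc_double_dfact[of m] by (simp add: Suc algebra_simps)
qed simp

lemma two_power_fact_div_fact_double:
  "2 ^ j * fact j / fact (2 * j) = (1 / of_nat (dfact (2 * j - 1)) :: 'a::field_char_0)"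
proof -
  have "(fact (2 * j) :: 'a) = 2 ^ j * fact j * of_nat (dfact (2 * j - 1))"
    by (metis fact_double_dfact of_nat_fact of_nat_mult of_nat_numeral of_nat_power)
  then show ?thesis
    by (simp add: field_simps)
qed

lemma two_power_fact_div_fact_Suc_double:
  "2 ^ j * fact j / fact (2 * j + 1) = (1 / of_nat (dfact (2 * j + 1)) :: 'a::field_char_0)"
proof -
  have "(fact (2 * j + 1) :: 'a) = 2 ^ j * fact j * of_nat (dfact (2 * j + 1))"
    by (metis fact_Suc_double_dfact of_nat_fact of_nat_mult of_nat_numeral of_nat_power)
  then show ?thesis
    by (simp add: field_simps)
qed

lemma sum_lessThan_id_nat: "(\<Sum>i<k. i) = k * (k - 1) div (2::nat)"
  using Sum_Ico_nat[of 0 k] by (simp add: atLeast0LessThan)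

lemma sum_lessThan_Suc_nat: "(\<Sum>i<k. Suc i) = k * (k + 1) div 2"
  using gauss_sum_from_Suc_0[of k, where 'a=nat] by (simp add: sum.atLeast1_atMost_eq)

lemma sum_atLeast1_atMost_nat: "(\<Sum>j=1..k. j) = k * (k + 1) div (2::nat)"
  using gauss_sum_from_Suc_0[of k, where 'a=nat] by simp

lemma prod_fact_div_fact_add:
  assumes "k > 0"
  shows "(\<Prod>i<k. fact i / fact (i + k) :: 'a::field_char_0)
           = (\<Prod>j=1..k-1. of_nat (fact j)) ^ 2 / (\<Prod>j=1..2*k-1. of_nat (fact j))"
proof -
  have "(\<Prod>j=1..2*k-1. of_nat (fact j) :: 'a) = (\<Prod>j<2*k. fact j)"
    using assms by (subst prod_atLeast1_pred_eq_lessThan) simp_all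
  also have "\<dots> = (\<Prod>j<k. fact j) * (\<Prod>j=k..<2*k. fact j)"
    unfolding atLeast0LessThan[symmetric] by (rule prod.atLeastLessThan_concat[symmetric]) simp_all
  also have "(\<Prod>j=k..<2*k. fact j :: 'a) = (\<Prod>i<k. fact (i + k))"
    using prod.shift_bounds_nat_ivl[of fact 0 k k] by (simp add: atLeast0LessThan mult_2)
  finally have "(\<Prod>j=1..2*k-1. of_nat (fact j) :: 'a) = (\<Prod>j<k. fact j) * (\<Prod>i<k. fact (i + k))" .
  moreover have "(\<Prod>j=1..k-1. of_nat (fact j) :: 'a) = (\<Prod>j<k. fact j)"
    using assms by (subst prod_atLeast1_pred_eq_lessThan) simp_all
  moreover have "(\<Prod>j<k. fact j :: 'a) \<noteq> 0"
    by (simp add: prod_zero_iff)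
  ultimately show ?thesis
    by (simp add: prod_dividef power2_eq_square)
qed

lemma superfactorial_ratio_eq_dfact:
  assumes "k > 0"
  shows "(\<Prod>j=1..k-1. of_nat (fact j)) ^ 2 / (\<Prod>j=1..2*k-1. of_nat (fact j))
           = (2 :: 'a::field_char_0) powi (int k - int k ^ 2)
               * (\<Prod>j=1..k-1. 1 / (of_nat (dfact (2*j-1)) * of_nat (dfact (2*j+1))))"
proof -
  have powers: "(\<Prod>j<k. inverse (4 ^ j) :: 'a) = 2 powi (int k - int k ^ 2)"
  proof -
    have "int k - int k ^ 2 = - int (2 * (\<Sum>j<k. j))"
      by (simp add: sum_lessThan_id_nat power2_eq_square algebra_simps del: of_nat_sum)
    then have "(2 :: 'a) powi (int k - int k ^ 2) = inverse (4 ^ (\<Sum>j<k. j))"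
      by (simp only: power_int_minus power_int_of_nat power_mult) simp
    then show ?thesis
      by (simp add: power_sum flip: prod_inversef[unfolded comp_def])
  qed
  have "(\<Prod>j=1..k-1. of_nat (fact j)) ^ 2 / (\<Prod>j=1..2*k-1. of_nat (fact j) :: 'a)
      = (\<Prod>j<k. fact j) ^ 2 / (\<Prod>j<2*k. fact j)"
    using assms by (subst (1 2) prod_atLeast1_pred_eq_lessThan) simp_all
  also have "\<dots> = (\<Prod>j<k. (fact j / fact (2 * j)) * (fact j / fact (2 * j + 1)))"
    by (simp only: prod_lessThan_double prod.distrib prod_dividef power2_eq_square times_divide_times_eq)
  also have "\<dots> = (\<Prod>j<k. inverse (4 ^ j) * (1 / (of_nat (dfact (2*j-1)) * of_nat (dfact (2*j+1)))))"
  proof (intro prod.cong refl)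
    fix j
    have "fact j / fact (2 * j) = inverse (2 ^ j) * (1 / of_nat (dfact (2 * j - 1)) :: 'a)"
      unfolding two_power_fact_div_fact_double[symmetric] by simp
    moreover have "fact j / fact (2 * j + 1) = inverse (2 ^ j) * (1 / of_nat (dfact (2 * j + 1)) :: 'a)"
      unfolding two_power_fact_div_fact_Suc_double[symmetric] by simp
    moreover have "(4 :: 'a) ^ j = 2 ^ j * 2 ^ j"
      by (simp flip: power_mult_distrib)
    ultimately show "fact j / fact (2 * j) * (fact j / fact (2 * j + 1))
        = inverse (4 ^ j) * (1 / (of_nat (dfact (2*j-1)) * of_nat (dfact (2*j+1))) :: 'a)"
      by (simp add: inverse_mult_distrib)
  qed
  also have "\<dots> = 2 powi (int k - int k ^ 2)
                    * (\<Prod>j<k. 1 / (of_nat (dfact (2*j-1)) * of_nat (dfact (2*j+1))))"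
    by (simp only: prod.distrib powers)
  also have "\<dots> = 2 powi (int k - int k ^ 2)
                    * (\<Prod>j=1..k-1. 1 / (of_nat (dfact (2*j-1)) * of_nat (dfact (2*j+1))))"
    using assms by (subst prod_atLeast1_pred_eq_lessThan) simp_all
  finally show ?thesis .
qed

lemma half_prod_two_power_fact_div_fact_double:
  assumes "k > 0"
  shows "1/2 * (\<Prod>i<k. 2 ^ (i + 1) * fact i / fact (2 * i) :: 'a::field_char_0)
           = 2 ^ (k - 1) * (\<Prod>j=1..k-1. 1 / of_nat (dfact (2*j-1)))"
proof -
  have "(\<Prod>i<k. 2 ^ (i + 1) * fact i / fact (2 * i) :: 'a) = (\<Prod>i<k. 2 * (1 / of_nat (dfact (2*i-1))))"
    unfolding two_power_fact_div_fact_double[symmetric] by (intro prod.cong refl) simp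
  also have "\<dots> = 2 ^ k * (\<Prod>i<k. 1 / of_nat (dfact (2*i-1)))"
    by (simp only: prod.distrib prod_constant card_lessThan)
  also have "\<dots> = 2 * 2 ^ (k - 1) * (\<Prod>j=1..k-1. 1 / of_nat (dfact (2*j-1)))"
    using assms by (subst prod_atLeast1_pred_eq_lessThan) (simp_all flip: power_Suc)
  finally show ?thesis
    by simp
qed

lemma two_power_prod_fact_div_fact_double:
  assumes "k > 0"
  shows "2 ^ (k * (k - 1) div 2 + k - 1) * (\<Prod>j=1..k-1. of_nat (fact j) / of_nat (fact (2*j)))
           = 2 ^ (k - 1) * (\<Prod>j=1..k-1. 1 / of_nat (dfact (2*j-1)) :: 'a::field_char_0)"
proof -
  have exponent: "k * (k - 1) div 2 + k - 1 = (k - 1) + (\<Sum>j<k. j)"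
    using assms by (simp add: sum_lessThan_id_nat)
  have "(2 :: 'a) ^ (\<Sum>j<k. j) = (\<Prod>j=1..k-1. 2 ^ j)"
    using assms by (subst prod_atLeast1_pred_eq_lessThan) (simp_all add: power_sum)
  then show ?thesis
    unfolding exponent power_add mult.assoc
    by (simp only: prod.distrib[symmetric] of_nat_fact times_divide_eq_right two_power_fact_div_fact_double)
qed

lemma two_power_triangle_prod_fact_div_fact_double:
  "2 ^ (k * (k + 1) div 2) * (\<Prod>j=1..k. of_nat (fact j) / of_nat (fact (2*j)))
     = (\<Prod>j=1..k. 1 / of_nat (dfact (2*j-1)) :: 'a::field_char_0)"
proof -
  have "(2 :: 'a) ^ (k * (k + 1) div 2) = (\<Prod>j=1..k. 2 ^ j)"
    unfolding sum_atLeast1_atMost_nat[symmetric] by (rule power_sum)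
  then show ?thesis
    by (simp only: prod.distrib[symmetric] of_nat_fact times_divide_eq_right two_power_fact_div_fact_double)
qed

lemma B_U_of_nat: "B_U (of_nat k) = of_nat (k ^ 2)"
  by (simp add: B_U_def)

lemma B_O_of_nat: "B_O (of_nat k) = of_nat (k * (k - 1) div 2)"
  unfolding B_O_def of_nat_triangle_minus sum_lessThan_id_nat ..

lemma B_Sp_of_nat: "B_Sp (of_nat k) = of_nat (k * (k + 1) div 2)"
  unfolding B_Sp_def of_nat_triangle_plus sum_lessThan_Suc_nat ..

lemma g_U_of_nat: "g_U (of_nat k) = of_nat (fact (k ^ 2)) * (\<Prod>i<k. fact i / fact (i + k))"
  unfolding g_U_def G_U_def B_U_of_nat limI[OF seq_U_tendsto] Gamma_fact by simp

lemma g_O_of_nat: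
  "g_O (of_nat k) = of_nat (fact (k * (k - 1) div 2)) * (1/2 * (\<Prod>i<k. 2 ^ (i + 1) * fact i / fact (2 * i)))"
  unfolding g_O_def G_O_def B_O_of_nat limI[OF seq_O_tendsto] Gamma_fact by simp

lemma g_Sp_of_nat:
  "g_Sp (of_nat k) = of_nat (fact (k * (k + 1) div 2)) * (\<Prod>j=1..k. 2 ^ j * fact j / fact (2 * j))"
  unfolding g_Sp_def G_Sp_def B_Sp_of_nat limI[OF seq_Sp_tendsto] Gamma_fact by simp

theorem lemma5p2:
  fixes k :: nat
  assumes "k > 0"
  shows "convergent (seq_U (of_nat k)) \<and> convergent (seq_O (of_nat k)) \<and>
         convergent (seq_Sp (of_nat k)) \<and>
    g_U (of_nat k) = of_nat (fact (k ^ 2)) *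
       ((\<Prod>j=1..k-1. of_nat (fact j))^2 / (\<Prod>j=1..2*k-1. of_nat (fact j))) \<and>
    g_U (of_nat k) = of_nat (fact (k ^ 2)) * (2::complex) powi (int k - int k ^ 2) *
       (\<Prod>j=1..k-1. 1 / (of_nat (dfact (2*j-1)) * of_nat (dfact (2*j+1)))) \<and>
    g_O (of_nat k) = of_nat (fact (k * (k - 1) div 2)) * 2 ^ (k * (k - 1) div 2 + k - 1) *
       (\<Prod>j=1..k-1. of_nat (fact j) / of_nat (fact (2*j))) \<and>
    g_O (of_nat k) = of_nat (fact (k * (k - 1) div 2)) * 2 ^ (k - 1) *
       (\<Prod>j=1..k-1. 1 / of_nat (dfact (2*j-1))) \<and>
    g_Sp (of_nat k) = of_nat (fact (k * (k + 1) div 2)) * 2 ^ (k * (k + 1) div 2) *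
       (\<Prod>j=1..k. of_nat (fact j) / of_nat (fact (2*j))) \<and>
    g_Sp (of_nat k) = of_nat (fact (k * (k + 1) div 2)) *
       (\<Prod>j=1..k. 1 / of_nat (dfact (2*j-1)))"
  using convergentI[OF seq_U_tendsto] convergentI[OF seq_O_tendsto] convergentI[OF seq_Sp_tendsto]
  unfolding g_U_of_nat g_O_of_nat g_Sp_of_nat mult.assoc
    prod_fact_div_fact_add[OF assms] superfactorial_ratio_eq_dfact[OF assms]
    half_prod_two_power_fact_div_fact_double[OF assms] two_power_prod_fact_div_fact_double[OF assms]
    two_power_fact_div_fact_double two_power_triangle_prod_fact_div_fact_double
  by blast

end
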